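(* Let $h$ be a snowflaking function and let $(X,d)$ be a metric space. If the metric space $(X,h\circ d)$ admits an isometric embedding into some finite-dimensional normed linear (Banach) space, then $X$ is finite.
   Context: Let $\mathbb R_{\geq}=[0,\infty)$. A function $h:\mathbb R_{\geq}\to\mathbb R_{\geq}$ is called a snowflaking function if: (S1) $h(0)=0$; (S2) $h$ is concave; (S3) $h(t)/t\to\infty$ as $t\to0^+$; (S4) $h(t)/t\to 0$ as $t\to\infty$. For such $h$ and a metric $d$ on $X$, $h\circ d$ is again a metric on $X$; $(X,h\circ d)$ is called the $h$-snowflake of $(X,d)$. *)

theory Defs
  imports "HOL-Analysis.Analysis"
begin

text \<open>Snowflaking function h : [0,inf) -> [0,inf), represented as a real function
  whose values on [0,inf) are nonnegative; only its restriction to [0,inf) matters.\<close>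
definition snowflaking :: "(real \<Rightarrow> real) \<Rightarrow> bool" where
  "snowflaking h \<longleftrightarrow>
     (\<forall>t\<ge>0. h t \<ge> 0) \<and>
     h 0 = 0 \<and>
     concave_on {0..} h \<and>
     filterlim (\<lambda>t. h t / t) at_top (at_right 0) \<and>
     ((\<lambda>t. h t / t) \<longlongrightarrow> 0) at_top"

end

theory Submission
  imports Defs
begin

text \<open>
  In a finite-dimensional normed space balls are compact, so an infinite image set contains a
  sequence converging to a point \<open>p\<close> or escaping to infinity, along which the directions
  seen from \<open>p\<close> converge. Three such points at rapidly decreasing distances from \<open>p\<close>
  are almost collinear: \<open>\<parallel>a - b\<parallel> + \<parallel>b - c\<parallel> / 2 \<le> \<parallel>a - c\<parallel>\<close>. For an
  \<open>h\<close>-snowflake embedding, concavity (\<open>h (s + t) \<le> h s + t h s / s\<close>) turns this into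
  \<open>h t / t \<le> 2 h s / s\<close> with \<open>s = d a b\<close> and \<open>t = d b c\<close>. In the convergent case
  \<open>t\<close> can be taken arbitrarily small while \<open>s\<close> stays bounded below, contradicting
  \<open>h t / t \<rightarrow> \<infinity>\<close> at \<open>0\<close>; in the escaping case \<open>c = p\<close> is fixed and
  \<open>s \<rightarrow> \<infinity>\<close>, contradicting \<open>h s / s \<rightarrow> 0\<close> at infinity.
\<close>

lemma abs_scaleR_infdist_le:
  fixes b w :: "'a::real_normed_vector"
  assumes "subspace S" "w \<in> S"
  shows "\<bar>c\<bar> * infdist b S \<le> norm (c *\<^sub>R b + w)"
proof (cases "c = 0")
  case False
  have "- (1 / c) *\<^sub>R w \<in> S"
    using assms by (simp add: subspace_neg subspace_scale)
  then have "infdist b S \<le> norm (b + (1 / c) *\<^sub>R w)"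
    using infdist_le by (fastforce simp: dist_norm)
  also have "b + (1 / c) *\<^sub>R w = (1 / c) *\<^sub>R (c *\<^sub>R b + w)"
    using False by (simp add: algebra_simps)
  finally have "infdist b S \<le> norm (c *\<^sub>R b + w) / \<bar>c\<bar>"
    by simp
  then show ?thesis
    using False by (simp add: pos_le_divide_eq mult.commute)
qed simp

lemma closed_if_compact_Int_cball:
  fixes S :: "'a::real_normed_vector set"
  assumes "\<And>r. compact (S \<inter> cball 0 r)"
  shows "closed S"
  unfolding closed_sequential_limits
proof (intro allI impI)
  fix x l assume x: "(\<forall>n. x n \<in> S) \<and> x \<longlonglongrightarrow> l"
  then obtain r where "range x \<subseteq> cball 0 r"
    using convergent_imp_bounded by (metis bounded_subset_ballD ball_subset_cball dual_order.trans)
  then have "\<forall>n. x n \<in> S \<inter> cball 0 r" using x by blast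
  then show "l \<in> S"
    using x compact_imp_closed[OF assms] closed_sequential_limits by blast
qed

lemma compact_span_Int_cball:
  fixes B :: "'a::real_normed_vector set"
  assumes "finite B"
  shows "compact (span B \<inter> cball 0 r)"
  using assms
proof (induction B arbitrary: r rule: finite_induct)
  case empty
  show ?case by (rule finite_imp_compact) (auto intro: finite_subset[of _ "{0}"])
next
  case (insert b B)
  show ?case
  proof (cases "b \<in> span B")
    case True
    then show ?thesis using insert.IH by (simp add: span_redundant)
  next
    case False
    define \<delta> where "\<delta> = infdist b (span B)"
    have "\<delta> > 0"
      unfolding \<delta>_def using False closed_if_compact_Int_cball[OF insert.IH] span_zero
      by (intro infdist_pos_not_in_closed) auto
    \<comment> \<open>The coefficient of \<open>b\<close> is bounded by \<open>r / \<delta>\<close>, so the ball is a closed part of the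
      image of a compact box under \<open>(c, w) \<mapsto> c b + w\<close>.\<close>
    define R where "R = r / \<delta>"
    define C where "C = {-R..R} \<times> (span B \<inter> cball 0 (r + R * norm b))"
    define K where "K = (\<lambda>(c, w). c *\<^sub>R b + w) ` C"
    have "compact K"
      unfolding K_def C_def case_prod_unfold using insert.IH
      by (intro compact_continuous_image compact_Times continuous_intros) auto
    have "span (insert b B) \<inter> cball 0 r \<subseteq> K"
    proof
      fix x assume x: "x \<in> span (insert b B) \<inter> cball 0 r"
      then obtain c where w: "x - c *\<^sub>R b \<in> span B"
        by (auto simp: span_breakdown_eq)
      have "\<bar>c\<bar> * \<delta> \<le> r"
        using abs_scaleR_infdist_le[OF subspace_span w, of c b] x unfolding \<delta>_def by simp
      then have c: "\<bar>c\<bar> \<le> R"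
        using \<open>\<delta> > 0\<close> unfolding R_def by (simp add: pos_le_divide_eq)
      have "norm (x - c *\<^sub>R b) \<le> norm x + \<bar>c\<bar> * norm b"
        by (metis norm_scaleR norm_triangle_ineq4)
      also have "\<dots> \<le> r + R * norm b"
        using x c by (intro add_mono mult_right_mono) auto
      finally have "(c, x - c *\<^sub>R b) \<in> C"
        using c w unfolding C_def by auto
      then show "x \<in> K"
        unfolding K_def by (rule image_eqI[rotated]) simp
    qed
    moreover have "K \<subseteq> span (insert b B)"
    proof
      fix x assume "x \<in> K"
      then obtain c w where "x = c *\<^sub>R b + w" "w \<in> span B"
        unfolding K_def C_def by auto
      then show "x \<in> span (insert b B)"
        by (metis span_add span_base span_mono span_scale insertI1 subset_insertI subsetD)
    qed
    ultimately have "span (insert b B) \<inter> cball 0 r = K \<inter> cball 0 r" by blast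
    then show ?thesis using \<open>compact K\<close> by (simp add: compact_Int_closed)
  qed
qed

lemma compact_cball_if_finite_span:
  fixes B :: "'a::real_normed_vector set"
  assumes "finite B" "span B = UNIV"
  shows "compact (cball (0::'a) r)"
  using compact_span_Int_cball[OF assms(1), of r] assms(2) by simp

lemma norm_add_ge_if_sgn_close:
  fixes w1 w2 :: "'a::real_normed_vector"
  assumes "norm (sgn w2 - sgn w1) \<le> 1/2"
  shows "norm w1 + norm w2 / 2 \<le> norm (w1 + w2)"
proof (cases "w1 = 0")
  case False
  have "w1 + w2 = (norm w1 + norm w2) *\<^sub>R sgn w1 + norm w2 *\<^sub>R (sgn w2 - sgn w1)"
    using False by (cases "w2 = 0") (simp_all add: sgn_div_norm algebra_simps)
  then have "norm (w1 + w2) \<ge> norm ((norm w1 + norm w2) *\<^sub>R sgn w1) - norm (norm w2 *\<^sub>R (sgn w2 - sgn w1))"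
    by (metis norm_diff_ineq)
  moreover have "norm (norm w2 *\<^sub>R (sgn w2 - sgn w1)) \<le> norm w2 / 2"
    using mult_left_mono[OF assms, of "norm w2"] by simp
  ultimately show ?thesis
    using False by (simp add: norm_sgn)
qed simp

lemma norm_sgn_diff_le:
  fixes x y :: "'a::real_normed_vector"
  assumes "x \<noteq> 0"
  shows "norm (sgn y - sgn x) \<le> 2 * norm (y - x) / norm x"
proof (cases "y = 0")
  case True
  then show ?thesis using assms by (simp add: norm_sgn)
next
  case False
  have nx: "norm x > 0" and ny: "norm y > 0" using assms False by auto
  have "sgn y - sgn x = (inverse (norm y) - inverse (norm x)) *\<^sub>R y + inverse (norm x) *\<^sub>R (y - x)"
    by (simp add: sgn_div_norm divide_inverse_commute scaleR_diff_left scaleR_diff_right)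
  then have "norm (sgn y - sgn x)
      \<le> \<bar>inverse (norm y) - inverse (norm x)\<bar> * norm y + inverse (norm x) * norm (y - x)"
    by (metis norm_triangle_ineq norm_scaleR abs_inverse abs_norm_cancel)
  also have "\<bar>inverse (norm y) - inverse (norm x)\<bar> * norm y = \<bar>norm x - norm y\<bar> / norm x"
  proof -
    have "inverse (norm y) - inverse (norm x) = (norm x - norm y) / (norm x * norm y)"
      using nx ny by (simp add: field_simps)
    then show ?thesis using nx ny by simp
  qed
  also have "\<bar>norm x - norm y\<bar> \<le> norm (y - x)"
    using norm_triangle_ineq3[of y x] by linarith
  finally show ?thesis
    using nx by (simp add: divide_right_mono field_simps)
qed

definition almost_between :: "'a::real_normed_vector \<Rightarrow> 'a \<Rightarrow> 'a \<Rightarrow> bool" where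
  "almost_between a b c \<longleftrightarrow> norm (a - b) + norm (b - c) / 2 \<le> norm (a - c)"

lemma almost_between_if_sgn_close:
  fixes a b c p :: "'a::real_normed_vector"
  assumes "b \<noteq> p" "norm (b - p) \<le> norm (a - p) / 16" "norm (c - p) \<le> norm (b - p) / 16"
    and "norm (sgn (a - p) - sgn (b - p)) \<le> 1/8"
  shows "almost_between a b c"
proof -
  have "norm (b - p) > 0" "norm (a - p) > 0" using assms(1,2) by auto
  have "norm (sgn (a - b) - sgn (a - p)) \<le> 2 * norm ((a - b) - (a - p)) / norm (a - p)"
    using \<open>norm (a - p) > 0\<close> by (intro norm_sgn_diff_le) auto
  also have "\<dots> \<le> 1/8"
    using assms(2) \<open>norm (a - p) > 0\<close> by (simp add: norm_minus_commute field_simps)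
  finally have ab: "norm (sgn (a - p) - sgn (a - b)) \<le> 1/8" by (simp add: norm_minus_commute)
  have "norm (sgn (b - c) - sgn (b - p)) \<le> 2 * norm ((b - c) - (b - p)) / norm (b - p)"
    using \<open>norm (b - p) > 0\<close> by (intro norm_sgn_diff_le) auto
  also have "\<dots> \<le> 1/8"
    using assms(3) \<open>norm (b - p) > 0\<close> by (simp add: norm_minus_commute field_simps)
  finally have bc: "norm (sgn (b - c) - sgn (b - p)) \<le> 1/8" .
  have "norm (sgn (b - p) - sgn (a - b)) \<le> 1/8 + 1/8"
    using assms(4) ab by (intro norm_diff_triangle_le[where y = "sgn (a - p)"]) (auto simp: norm_minus_commute)
  then have "norm (sgn (b - c) - sgn (a - b)) \<le> 1/8 + (1/8 + 1/8)"
    by (rule norm_diff_triangle_le[OF bc])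
  then have "norm ((a - b) + (b - c)) \<ge> norm (a - b) + norm (b - c) / 2"
    by (intro norm_add_ge_if_sgn_close) simp
  then show ?thesis by (simp add: almost_between_def)
qed

lemma shrinking_almost_between_triples:
  fixes w :: "nat \<Rightarrow> 'a::real_normed_vector"
  assumes "\<forall>j. w j \<noteq> p" "w \<longlonglongrightarrow> p" "(\<lambda>j. sgn (w j - p)) \<longlonglongrightarrow> u"
  shows "\<exists>\<alpha>>0. \<forall>\<beta>>0. \<exists>n m k. \<alpha> \<le> norm (w n - w m) \<and> w m \<noteq> w k \<and> norm (w m - w k) < \<beta>
           \<and> almost_between (w n) (w m) (w k)"
proof -
  define \<rho> where "\<rho> j = norm (w j - p)" for j
  have \<rho>_pos: "\<rho> j > 0" for j
    using assms(1) unfolding \<rho>_def by simp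
  have \<rho>_small: "\<exists>m\<ge>n. \<rho> m < e" if "e > 0" for n e
  proof -
    have "\<rho> \<longlonglongrightarrow> 0"
      unfolding \<rho>_def using tendsto_norm_zero[OF LIM_zero[OF assms(2)]] .
    then have "eventually (\<lambda>j. n \<le> j \<and> \<rho> j < e) sequentially"
      using order_tendstoD(2) that by (intro eventually_conj) auto
    then show ?thesis
      using eventually_happens'[OF sequentially_bot] by blast
  qed
  obtain n where n: "\<forall>j\<ge>n. norm (sgn (w j - p) - u) < 1/16"
    using assms(3) unfolding LIMSEQ_iff by (meson zero_less_divide_1_iff zero_less_numeral)
  have triples: "\<exists>m k. \<rho> n / 2 \<le> norm (w n - w m) \<and> w m \<noteq> w k \<and> norm (w m - w k) < \<beta>
           \<and> almost_between (w n) (w m) (w k)" if \<beta>: "\<beta> > 0" for \<beta>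
  proof -
    obtain m where m: "m \<ge> n" "\<rho> m < min (\<rho> n / 16) (\<beta> / 2)"
      using \<rho>_small[of "min (\<rho> n / 16) (\<beta> / 2)" n] \<rho>_pos \<beta> by auto
    obtain k where k: "\<rho> k < \<rho> m / 16"
      using \<rho>_small[of "\<rho> m / 16" 0] \<rho>_pos by auto
    have "norm (sgn (w n - p) - sgn (w m - p)) \<le> 1/16 + 1/16"
      using n m(1) by (intro norm_diff_triangle_le[where y = u]) (auto simp: norm_minus_commute less_imp_le)
    then have "almost_between (w n) (w m) (w k)"
      using m k \<rho>_pos assms(1) unfolding \<rho>_def by (intro almost_between_if_sgn_close) auto
    moreover have "\<rho> n \<le> norm (w n - w m) + \<rho> m"
      unfolding \<rho>_def by (rule norm_diff_triangle_le) auto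
    moreover have "norm (w m - w k) \<le> \<rho> m + \<rho> k"
      unfolding \<rho>_def by (rule norm_diff_triangle_le) (auto simp: norm_minus_commute)
    moreover have "w m \<noteq> w k"
      using k \<rho>_pos[of m] unfolding \<rho>_def by auto
    ultimately show ?thesis
      using m k \<rho>_pos[of n] \<rho>_pos[of k] by (intro exI[of _ m] exI[of _ k]) auto
  qed
  show ?thesis
  proof (rule exI[of _ "\<rho> n / 2"], intro conjI allI impI)
    show "\<rho> n / 2 > 0"
      using \<rho>_pos by simp
    fix \<beta> :: real assume "\<beta> > 0"
    then show "\<exists>n' m k. \<rho> n / 2 \<le> norm (w n' - w m) \<and> w m \<noteq> w k \<and> norm (w m - w k) < \<beta>
           \<and> almost_between (w n') (w m) (w k)"
      using triples by blast
  qed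
qed

lemma escaping_almost_between_triples:
  fixes w :: "nat \<Rightarrow> 'a::real_normed_vector"
  assumes "filterlim (\<lambda>j. norm (w j - p)) at_top sequentially" "(\<lambda>j. sgn (w j - p)) \<longlonglongrightarrow> u"
  shows "\<exists>m. w m \<noteq> p \<and> (\<forall>\<alpha>. \<exists>n. \<alpha> \<le> norm (w n - w m) \<and> almost_between (w n) (w m) p)"
proof -
  define \<rho> where "\<rho> j = norm (w j - p)" for j
  have \<rho>_large: "\<exists>m\<ge>n. a \<le> \<rho> m" for n a
  proof -
    have "eventually (\<lambda>j. n \<le> j \<and> a \<le> \<rho> j) sequentially"
      using assms(1) unfolding \<rho>_def filterlim_at_top by (auto intro: eventually_conj)
    then show ?thesis
      using eventually_happens'[OF sequentially_bot] by blast
  qed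
  obtain n0 where n0: "\<forall>j\<ge>n0. norm (sgn (w j - p) - u) < 1/16"
    using assms(2) unfolding LIMSEQ_iff by (meson zero_less_divide_1_iff zero_less_numeral)
  obtain m where m: "m \<ge> n0" "1 \<le> \<rho> m"
    using \<rho>_large by blast
  have "\<exists>n. \<alpha> \<le> norm (w n - w m) \<and> almost_between (w n) (w m) p" for \<alpha>
  proof -
    obtain n where n: "n \<ge> n0" "max (16 * \<rho> m) (\<alpha> + \<rho> m) \<le> \<rho> n"
      using \<rho>_large by blast
    have "norm (sgn (w n - p) - sgn (w m - p)) \<le> 1/16 + 1/16"
      using n0 n(1) m(1) by (intro norm_diff_triangle_le[where y = u]) (auto simp: norm_minus_commute less_imp_le)
    then have "almost_between (w n) (w m) p"
      using m n unfolding \<rho>_def by (intro almost_between_if_sgn_close) auto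
    moreover have "\<rho> n \<le> norm (w n - w m) + \<rho> m"
      unfolding \<rho>_def by (rule norm_diff_triangle_le) auto
    ultimately show ?thesis
      using n by (intro exI[of _ n]) auto
  qed
  moreover have "w m \<noteq> p"
    using m unfolding \<rho>_def by auto
  ultimately show ?thesis by blast
qed

lemma convergent_sgn_subseq:
  fixes w :: "nat \<Rightarrow> 'a::real_normed_vector" and B :: "'a set"
  assumes "finite B" "span B = UNIV"
  obtains r u where "strict_mono r" "(\<lambda>j. sgn (w (r j))) \<longlonglongrightarrow> u"
proof -
  have "seq_compact (cball (0::'a) 1)"
    using compact_cball_if_finite_span[OF assms] by (rule compact_imp_seq_compact)
  moreover have "\<forall>j. sgn (w j) \<in> cball 0 1"
    by (simp add: norm_sgn)
  ultimately show ?thesis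
    using that by (auto elim!: seq_compactE simp: o_def)
qed

lemma bounded_infinite_imp_convergent_seq:
  fixes Y B :: "'a::real_normed_vector set"
  assumes "finite B" "span B = UNIV" "bounded Y" "infinite Y"
  obtains w p where "\<forall>j. w j \<in> Y - {p}" "w \<longlonglongrightarrow> p"
proof -
  obtain r where "Y \<subseteq> cball 0 r"
    using assms(3) by (meson bounded_subset_ballD ball_subset_cball order.trans)
  then obtain p where "p islimpt Y"
    using compact_cball_if_finite_span[OF assms(1,2)] assms(4) compact_eq_Bolzano_Weierstrass by blast
  then show ?thesis
    using that by (auto simp: islimpt_sequential)
qed

definition shrinking_triples :: "'a::real_normed_vector set \<Rightarrow> bool" where
  "shrinking_triples Y \<longleftrightarrow> (\<exists>\<alpha>>0. \<forall>\<beta>>0. \<exists>a\<in>Y. \<exists>b\<in>Y. \<exists>c\<in>Y.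
     \<alpha> \<le> norm (a - b) \<and> b \<noteq> c \<and> norm (b - c) < \<beta> \<and> almost_between a b c)"

definition escaping_triples :: "'a::real_normed_vector set \<Rightarrow> bool" where
  "escaping_triples Y \<longleftrightarrow> (\<exists>b\<in>Y. \<exists>c\<in>Y. b \<noteq> c \<and>
     (\<forall>\<alpha>. \<exists>a\<in>Y. \<alpha> \<le> norm (a - b) \<and> almost_between a b c))"

lemma infinite_imp_shrinking_or_escaping_triples:
  fixes Y B :: "'a::real_normed_vector set"
  assumes "finite B" "span B = UNIV" "infinite Y"
  shows "shrinking_triples Y \<or> escaping_triples Y"
proof (cases "bounded Y")
  case True
  obtain w p where w: "\<forall>j. w j \<in> Y - {p}" "w \<longlonglongrightarrow> p"
    using bounded_infinite_imp_convergent_seq[OF assms(1,2) True assms(3)] .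
  obtain r u where r: "strict_mono r" "(\<lambda>j. sgn (w (r j) - p)) \<longlonglongrightarrow> u"
    using convergent_sgn_subseq[OF assms(1,2), of "\<lambda>j. w j - p"] .
  have "(\<lambda>j. w (r j)) \<longlonglongrightarrow> p"
    using LIMSEQ_subseq_LIMSEQ[OF w(2) r(1)] by (simp add: o_def)
  then obtain \<alpha> where "\<alpha> > 0" and \<alpha>: "\<forall>\<beta>>0. \<exists>n m k. \<alpha> \<le> norm (w (r n) - w (r m)) \<and>
      w (r m) \<noteq> w (r k) \<and> norm (w (r m) - w (r k)) < \<beta> \<and> almost_between (w (r n)) (w (r m)) (w (r k))"
    using shrinking_almost_between_triples[of "\<lambda>j. w (r j)" p u] w(1) r(2) by auto
  have "\<exists>a\<in>Y. \<exists>b\<in>Y. \<exists>c\<in>Y. \<alpha> \<le> norm (a - b) \<and> b \<noteq> c \<and> norm (b - c) < \<beta> \<and> almost_between a b c"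
    if "\<beta> > 0" for \<beta>
    using \<alpha> that w(1) by (metis DiffD1)
  then show ?thesis
    unfolding shrinking_triples_def using \<open>\<alpha> > 0\<close> by blast
next
  case False
  obtain p where p: "p \<in> Y"
    using assms(3) by (metis finite.emptyI ex_in_conv)
  have "\<exists>y\<in>Y. real j \<le> norm (y - p)" for j
    using False unfolding bounded_any_center[of Y p]
    by (metis dist_norm linorder_not_le norm_minus_commute order_less_imp_le)
  then obtain w where w: "\<And>j. w j \<in> Y" "\<And>j. real j \<le> norm (w j - p)"
    by metis
  obtain r u where r: "strict_mono r" "(\<lambda>j. sgn (w (r j) - p)) \<longlonglongrightarrow> u"
    using convergent_sgn_subseq[OF assms(1,2), of "\<lambda>j. w j - p"] .
  have "real j \<le> norm (w (r j) - p)" for j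
    using seq_suble[OF r(1), of j] w(2)[of "r j"] by linarith
  then have "filterlim (\<lambda>j. norm (w (r j) - p)) at_top sequentially"
    by (intro filterlim_at_top_mono[OF filterlim_real_sequentially]) auto
  then obtain m where "w (r m) \<noteq> p" and
    m: "\<forall>\<alpha>. \<exists>n. \<alpha> \<le> norm (w (r n) - w (r m)) \<and> almost_between (w (r n)) (w (r m)) p"
    using escaping_almost_between_triples[of "\<lambda>j. w (r j)" p u] r(2) by blast
  then have "escaping_triples Y"
    unfolding escaping_triples_def using w(1) p by metis
  then show ?thesis ..
qed

lemma concave_on_three_points:
  fixes h :: "real \<Rightarrow> real"
  assumes "concave_on {0..} h" "0 \<le> x" "x < y" "y < z"
  shows "(h z - h y) * (y - x) \<le> (h y - h x) * (z - y)"
proof -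
  define t where "t = (y - x) / (z - x)"
  have t: "0 \<le> t" "t \<le> 1"
    using assms(2-) unfolding t_def by (auto simp: field_simps)
  have "(1 - t) *\<^sub>R x + t *\<^sub>R z = x + t * (z - x)"
    by (simp add: algebra_simps)
  also have "\<dots> = y"
    using assms(3,4) unfolding t_def by simp
  finally have "(1 - t) * h x + t * h z \<le> h y"
    using concave_onD[OF assms(1), of t x z] t assms(2-) by auto
  moreover have "1 - t = (z - y) / (z - x)"
    using assms(3,4) unfolding t_def by (simp add: field_simps)
  ultimately have "((z - y) * h x + (y - x) * h z) / (z - x) \<le> h y"
    unfolding t_def by (simp add: add_divide_distrib)
  then have "(z - y) * h x + (y - x) * h z \<le> (z - x) * h y"
    using assms(3,4) by (simp add: divide_le_eq mult.commute)
  then show ?thesis by (simp add: algebra_simps)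
qed

lemma concave_nonneg_imp_mono:
  fixes h :: "real \<Rightarrow> real"
  assumes "concave_on {0..} h" "\<forall>t\<ge>0. 0 \<le> h t" "0 \<le> x" "x \<le> y"
  shows "h x \<le> h y"
proof (rule ccontr)
  assume "\<not> h x \<le> h y"
  then have "x < y" using assms(4) by (cases "x = y") auto
  define \<sigma> where "\<sigma> = (h x - h y) / (y - x)"
  have "\<sigma> > 0"
    using \<open>\<not> h x \<le> h y\<close> \<open>x < y\<close> unfolding \<sigma>_def by auto
  define z where "z = y + (h y + 1) / \<sigma>"
  have "h y \<ge> 0"
    using assms(2-4) by simp
  then have "y < z"
    unfolding z_def using \<open>\<sigma> > 0\<close> by simp
  have "(h z - h y) * (y - x) \<le> (h y - h x) * (z - y)"
    using concave_on_three_points[OF assms(1,3) \<open>x < y\<close> \<open>y < z\<close>] .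
  then have "h z - h y \<le> - \<sigma> * (z - y)"
    using \<open>x < y\<close> unfolding \<sigma>_def by (simp add: field_simps)
  also have "- \<sigma> * (z - y) = - (h y + 1)"
    unfolding z_def using \<open>\<sigma> > 0\<close> by simp
  finally have "h z < 0" by simp
  moreover have "h z \<ge> 0"
    using assms(2-4) \<open>y < z\<close> by simp
  ultimately show False by simp
qed

lemma concave_add_le:
  fixes h :: "real \<Rightarrow> real"
  assumes "concave_on {0..} h" "0 \<le> h 0" "0 < s" "0 \<le> t"
  shows "h (s + t) \<le> h s + t * (h s / s)"
proof (cases "t = 0")
  case False
  then have "(h (s + t) - h s) * s \<le> (h s - h 0) * t"
    using concave_on_three_points[OF assms(1), of 0 s "s + t"] assms(3,4) by auto
  also have "\<dots> \<le> h s * t"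
    using assms(2,4) by (intro mult_right_mono) auto
  finally show ?thesis
    using assms(3) by (simp add: field_simps)
qed simp

lemma concave_ratio_antimono:
  fixes h :: "real \<Rightarrow> real"
  assumes "concave_on {0..} h" "0 \<le> h 0" "0 < x" "x \<le> y"
  shows "h y / y \<le> h x / x"
proof -
  have "h (x + (y - x)) \<le> h x + (y - x) * (h x / x)"
    using concave_add_le[OF assms(1,2,3), of "y - x"] assms(4) by simp
  also have "\<dots> = y * (h x / x)"
    using assms(3) by (simp add: field_simps)
  finally show ?thesis
    using assms(3,4) by (simp add: divide_le_eq mult.commute)
qed

context
  fixes h :: "real \<Rightarrow> real"
  assumes h: "snowflaking h"
begin

lemma snowflaking_mono: "0 \<le> x \<Longrightarrow> x \<le> y \<Longrightarrow> h x \<le> h y"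
  using h concave_nonneg_imp_mono unfolding snowflaking_def by blast

lemma snowflaking_ratio_antimono: "0 < x \<Longrightarrow> x \<le> y \<Longrightarrow> h y / y \<le> h x / x"
  using h concave_ratio_antimono unfolding snowflaking_def by (metis order_refl)

lemma snowflaking_ratio_large_near_0:
  obtains \<eta> where "\<eta> > 0" "\<And>t. 0 < t \<Longrightarrow> t < \<eta> \<Longrightarrow> C \<le> h t / t"
proof -
  have "eventually (\<lambda>t. C \<le> h t / t) (at_right 0)"
    using h unfolding snowflaking_def filterlim_at_top by blast
  then show ?thesis
    using that unfolding eventually_at_right_field by auto
qed

lemma snowflaking_pos: "0 < t \<Longrightarrow> 0 < h t"
proof (rule ccontr)
  assume "0 < t" "\<not> 0 < h t"
  obtain \<eta> where "\<eta> > 0" and \<eta>: "\<And>s. 0 < s \<Longrightarrow> s < \<eta> \<Longrightarrow> 1 \<le> h s / s"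
    using snowflaking_ratio_large_near_0[where C = 1] by blast
  define s where "s = min \<eta> t / 2"
  have "0 < s" "s < \<eta>" "s \<le> t"
    using \<open>\<eta> > 0\<close> \<open>0 < t\<close> unfolding s_def by auto
  then have "h s \<le> 0"
    using snowflaking_mono[of s t] \<open>\<not> 0 < h t\<close> by auto
  then show False
    using \<eta>[OF \<open>0 < s\<close> \<open>s < \<eta>\<close>] \<open>0 < s\<close> by (simp add: divide_le_0_iff)
qed

lemma snowflaking_ratio_small_scale:
  assumes "0 < s0"
  obtains \<beta> where "\<beta> > 0"
    "\<And>s t. 0 < s \<Longrightarrow> 0 < t \<Longrightarrow> h s0 < h s \<Longrightarrow> h t < \<beta> \<Longrightarrow> 2 * (h s / s) < h t / t"
proof -
  obtain \<eta> where "\<eta> > 0" and \<eta>: "\<And>t. 0 < t \<Longrightarrow> t < \<eta> \<Longrightarrow> 2 * (h s0 / s0) + 1 \<le> h t / t"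
    using snowflaking_ratio_large_near_0[where C = "2 * (h s0 / s0) + 1"] by blast
  have "2 * (h s / s) < h t / t" if "0 < s" "0 < t" "h s0 < h s" "h t < h \<eta>" for s t
  proof -
    have "s0 < s" "t < \<eta>"
      using snowflaking_mono[of s s0] snowflaking_mono[of \<eta> t] that \<open>\<eta> > 0\<close> by force+
    then show ?thesis
      using snowflaking_ratio_antimono[OF assms, of s] \<eta>[of t] that(2) by linarith
  qed
  then show ?thesis
    using that snowflaking_pos[OF \<open>\<eta> > 0\<close>] by blast
qed

lemma snowflaking_ratio_large_scale:
  assumes "0 < t"
  obtains \<alpha> where "\<And>s. 0 < s \<Longrightarrow> \<alpha> \<le> h s \<Longrightarrow> 2 * (h s / s) < h t / t"
proof -
  have "h t / t / 2 > 0"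
    using snowflaking_pos[OF assms] assms by simp
  then have "eventually (\<lambda>s. h s / s < h t / t / 2) at_top"
    using h order_tendstoD(2) unfolding snowflaking_def by blast
  then obtain S where S: "\<And>s. S \<le> s \<Longrightarrow> h s / s < h t / t / 2"
    unfolding eventually_at_top_linorder by auto
  have "2 * (h s / s) < h t / t" if "0 < s" "h (max S 0) + 1 \<le> h s" for s
  proof -
    have "max S 0 < s"
      using snowflaking_mono[of s "max S 0"] that by force
    then show ?thesis
      using S[of s] by simp
  qed
  then show ?thesis
    using that by blast
qed

end

locale snowflake_embedding = Metric_space X d
  for X :: "'a set" and d :: "'a \<Rightarrow> 'a \<Rightarrow> real" +
  fixes h :: "real \<Rightarrow> real" and f :: "'a \<Rightarrow> 'b::real_normed_vector"
  assumes snowflaking: "snowflaking h"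
    and norm_eq: "\<And>x y. x \<in> X \<Longrightarrow> y \<in> X \<Longrightarrow> norm (f x - f y) = h (d x y)"
begin

lemma h_zero: "h 0 = 0"
  using snowflaking unfolding snowflaking_def by blast

lemma dist_pos: "x \<in> X \<Longrightarrow> y \<in> X \<Longrightarrow> x \<noteq> y \<Longrightarrow> 0 < d x y"
  using nonneg[of x y] zero[of x y] by linarith

lemma inj: "inj_on f X"
proof (rule inj_onI, rule ccontr)
  fix x y assume "x \<in> X" "y \<in> X" "f x = f y" "x \<noteq> y"
  then have "0 < h (d x y)"
    using dist_pos snowflaking_pos[OF snowflaking] by blast
  then show False
    using norm_eq[OF \<open>x \<in> X\<close> \<open>y \<in> X\<close>] \<open>f x = f y\<close> by simp
qed

lemma ratio_le:
  assumes "a \<in> X" "b \<in> X" "c \<in> X" "a \<noteq> b" "b \<noteq> c" "almost_between (f a) (f b) (f c)"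
  shows "h (d b c) / d b c \<le> 2 * (h (d a b) / d a b)"
proof -
  define s t where "s = d a b" and "t = d b c"
  have "0 < s" "0 < t"
    unfolding s_def t_def using dist_pos assms by auto
  have "h s + h t / 2 \<le> h (d a c)"
    using assms norm_eq unfolding s_def t_def almost_between_def by simp
  also have "\<dots> \<le> h (s + t)"
    using snowflaking_mono[OF snowflaking] triangle[OF assms(1-3)] unfolding s_def t_def by simp
  also have "\<dots> \<le> h s + t * (h s / s)"
    using concave_add_le[of h s t] snowflaking \<open>0 < s\<close> \<open>0 < t\<close> unfolding snowflaking_def by simp
  finally have "h t \<le> (2 * (h s / s)) * t" by (simp add: algebra_simps)
  then show ?thesis
    using \<open>0 < t\<close> unfolding s_def[symmetric] t_def[symmetric] by (simp add: pos_divide_le_eq)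
qed

lemma not_shrinking_triples: "\<not> shrinking_triples (f ` X)"
proof
  assume "shrinking_triples (f ` X)"
  then obtain \<alpha> where "\<alpha> > 0" and triples: "\<And>\<beta>. \<beta> > 0 \<Longrightarrow> \<exists>a\<in>X. \<exists>b\<in>X. \<exists>c\<in>X.
      \<alpha> \<le> h (d a b) \<and> f b \<noteq> f c \<and> h (d b c) < \<beta> \<and> almost_between (f a) (f b) (f c)"
    unfolding shrinking_triples_def by (auto simp: norm_eq)
  obtain b0 c0 where "b0 \<in> X" "c0 \<in> X" "f b0 \<noteq> f c0" "h (d b0 c0) < \<alpha>"
    using triples[OF \<open>\<alpha> > 0\<close>] by blast
  then have "0 < d b0 c0"
    using dist_pos by blast
  then obtain \<beta> where "\<beta> > 0" and \<beta>: "\<And>s t. 0 < s \<Longrightarrow> 0 < t \<Longrightarrow> h (d b0 c0) < h s \<Longrightarrow> h t < \<beta>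
      \<Longrightarrow> 2 * (h s / s) < h t / t"
    by (rule snowflaking_ratio_small_scale[OF snowflaking]) blast
  obtain a b c where abc: "a \<in> X" "b \<in> X" "c \<in> X" "\<alpha> \<le> h (d a b)" "f b \<noteq> f c" "h (d b c) < \<beta>"
    and between: "almost_between (f a) (f b) (f c)"
    using triples[OF \<open>\<beta> > 0\<close>] by blast
  have "a \<noteq> b" "b \<noteq> c"
    using abc \<open>\<alpha> > 0\<close> h_zero by auto
  then have "h (d b c) / d b c \<le> 2 * (h (d a b) / d a b)"
    using ratio_le abc between by blast
  moreover have "2 * (h (d a b) / d a b) < h (d b c) / d b c"
    using \<beta> dist_pos abc \<open>a \<noteq> b\<close> \<open>b \<noteq> c\<close> \<open>h (d b0 c0) < \<alpha>\<close> by simp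
  ultimately show False by simp
qed

lemma not_escaping_triples: "\<not> escaping_triples (f ` X)"
proof
  assume "escaping_triples (f ` X)"
  then obtain b c where "b \<in> X" "c \<in> X" "b \<noteq> c" and triples: "\<And>\<alpha>. \<exists>a\<in>X.
      \<alpha> \<le> h (d a b) \<and> almost_between (f a) (f b) (f c)"
    unfolding escaping_triples_def by (auto simp: norm_eq)
  then have "0 < d b c"
    using dist_pos by blast
  then obtain \<alpha> where \<alpha>: "\<And>s. 0 < s \<Longrightarrow> \<alpha> \<le> h s \<Longrightarrow> 2 * (h s / s) < h (d b c) / d b c"
    by (rule snowflaking_ratio_large_scale[OF snowflaking]) blast
  obtain a where a: "a \<in> X" "max \<alpha> 1 \<le> h (d a b)" and between: "almost_between (f a) (f b) (f c)"
    using triples by blast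
  have "a \<noteq> b"
    using a h_zero by auto
  then have "h (d b c) / d b c \<le> 2 * (h (d a b) / d a b)"
    using ratio_le a \<open>b \<in> X\<close> \<open>c \<in> X\<close> \<open>b \<noteq> c\<close> between by blast
  moreover have "2 * (h (d a b) / d a b) < h (d b c) / d b c"
    using \<alpha> dist_pos a \<open>b \<in> X\<close> \<open>a \<noteq> b\<close> by simp
  ultimately show False by simp
qed

end

theorem theorem1p2:
  fixes h :: "real \<Rightarrow> real" and X :: "'a set" and d :: "'a \<Rightarrow> 'a \<Rightarrow> real"
    and f :: "'a \<Rightarrow> 'b::real_normed_vector"
  assumes "snowflaking h"
    and "Metric_space X d"
    and "\<exists>B::'b set. finite B \<and> span B = UNIV"
    and "\<forall>x\<in>X. \<forall>y\<in>X. dist (f x) (f y) = h (d x y)"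
  shows "finite X"
proof -
  interpret snowflake_embedding X d h f
    unfolding snowflake_embedding_def snowflake_embedding_axioms_def
    using assms(1,2,4) by (simp add: dist_norm)
  obtain B :: "'b set" where "finite B" "span B = UNIV"
    using assms(3) by blast
  show ?thesis
  proof (rule ccontr)
    assume "infinite X"
    then have "infinite (f ` X)"
      using finite_image_iff inj by blast
    then show False
      using infinite_imp_shrinking_or_escaping_triples[OF \<open>finite B\<close> \<open>span B = UNIV\<close>]
        not_shrinking_triples not_escaping_triples by blast
  qed
qed

end
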